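(* Let $n_0\ge2$ be an integer and define $\mathcal{X}_{n_0}(s)=\sum_{n\ge n_0}x(n)n^{-s}$, $\mathcal{Y}_{n_0}(s)=\sum_{n\ge n_0}y(n)n^{-s}$, $\mathcal{Z}_{n_0}(s)=\sum_{n\ge n_0}z(n)n^{-s}$. Set $$C=I-\begin{pmatrix}2^{-s}&2^{-s}&2^{-s}\\2^{1-s}&0&2^{1-s}\\2^{1-s}&2^{1-s}&0\end{pmatrix}.$$ Then $C\,(\mathcal{X}_{n_0}(s),\mathcal{Y}_{n_0}(s),\mathcal{Z}_{n_0}(s))^\top=(\mathcal{J}_{n_0}(s),\mathcal{K}_{n_0}(s),\mathcal{L}_{n_0}(s))^\top$, where $$\mathcal{J}_{n_0}(s)=2^{-s}\Sigma(s,-\tfrac12,\mathcal{Y}_{n_0})-\frac{y(n_0)}{(2n_0-1)^s}+\sum_{n_0\le n<2n_0}\frac{x(n)}{n^s},$$ $$\mathcal{K}_{n_0}(s)=2^{-s}\Sigma(s,1,\mathcal{X}_{n_0})+2^{-s}\Sigma(s,-\tfrac12,\mathcal{X}_{n_0})+2^{-s}\Sigma(s,\tfrac12,\mathcal{Z}_{n_0})+\frac{x(n_0-1)}{(2n_0)^s}-\frac{x(n_0)}{(2n_0-1)^s}+\sum_{n_0\le n<2n_0}\frac{y(n)}{n^s},$$ $$\mathcal{L}_{n_0}(s)=2^{1-s}\Sigma(s,-\tfrac12,\mathcal{Y}_{n_0})-\frac{2y(n_0)}{(2n_0-1)^s}+\sum_{n_0\le n<2n_0}\frac{z(n)}{n^s},$$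 with $\Sigma(s,\beta,\mathcal{D})=\sum_{k\ge1}\binom{-s}{k}\beta^k\mathcal{D}(s+k)$; and this provides meromorphic continuations of $\mathcal{X}_{n_0}$, $\mathcal{Y}_{n_0}$, $\mathcal{Z}_{n_0}$ to $\operatorname{Re}s>1$ whose only possible poles are at $\kappa+\frac{2\pi i\ell}{\log2}$, $\ell\in\mathbb{Z}$, all of which are simple poles, where $\kappa=\log_2(3+\sqrt{17})-1$.
   Context: Pascal's rhombus consists of integers $r_{i,j}$ for $i\ge0$, $j\in\mathbb{Z}$, with $r_{0,j}=0$ for all $j$, $r_{1,0}=1$, $r_{1,j}=0$ for $j\ne0$, and $r_{i,j}=r_{i-1,j-1}+r_{i-1,j}+r_{i-1,j+1}+r_{i-2,j}$ for $i\ge2$. For $n\ge1$: $x(n)$ is the number of $j\in\mathbb{Z}$ with $r_{n,j}$ odd; $y(n)$ is the number of $j\in\mathbb{Z}$ with $r_{2n-1,2j}$ odd; $z(n)$ is the number of $j\in\mathbb{Z}$ with $r_{2n,2j-1}$ odd; $x(0)=y(0)=z(0)=0$. *)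

theory Defs
  imports "HOL-Complex_Analysis.Complex_Analysis"
begin

fun rh :: "nat \<Rightarrow> int \<Rightarrow> int" where
  "rh 0 j = 0"
| "rh (Suc 0) j = (if j = 0 then 1 else 0)"
| "rh (Suc (Suc i)) j = rh (Suc i) (j - 1) + rh (Suc i) j + rh (Suc i) (j + 1) + rh i j"

definition xr :: "nat \<Rightarrow> nat" where
  "xr n = (if n = 0 then 0 else card {j::int. odd (rh n j)})"

definition yr :: "nat \<Rightarrow> nat" where
  "yr n = (if n = 0 then 0 else card {j::int. odd (rh (2*n - 1) (2*j))})"

definition zr :: "nat \<Rightarrow> nat" where
  "zr n = (if n = 0 then 0 else card {j::int. odd (rh (2*n) (2*j - 1))})"

definition dser :: "(nat \<Rightarrow> nat) \<Rightarrow> nat \<Rightarrow> complex \<Rightarrow> complex" where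
  "dser a n0 s = (\<Sum>n. if n0 \<le> n then of_nat (a n) / (of_nat n) powr s else 0)"

definition Sig :: "complex \<Rightarrow> complex \<Rightarrow> (complex \<Rightarrow> complex) \<Rightarrow> complex" where
  "Sig s \<beta> D = (\<Sum>k. ((- s) gchoose (Suc k)) * \<beta> ^ (Suc k) * D (s + of_nat (Suc k)))"

definition kappa :: real where
  "kappa = log 2 (3 + sqrt 17) - 1"

definition pole_set :: "complex set" where
  "pole_set = {complex_of_real kappa + 2 * pi * \<i> * of_int l / complex_of_real (ln 2) | l. True}"

text \<open>F is a meromorphic continuation of D to Re s > 1 agreeing with D where the series
  converges absolutely (Re s > 2 suffices), analytic off pole_set, with only simple poles.\<close>
definition good_continuation :: "(complex \<Rightarrow> complex) \<Rightarrow> (complex \<Rightarrow> complex) \<Rightarrow> bool" where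
  "good_continuation D F \<longleftrightarrow>
     F meromorphic_on {s. 1 < Re s}
   \<and> (\<forall>s. 2 < Re s \<longrightarrow> F s = D s)
   \<and> (\<forall>s. 1 < Re s \<and> s \<notin> pole_set \<longrightarrow> F analytic_on {s})
   \<and> (\<forall>s\<in>pole_set. is_pole F s \<longrightarrow> zorder F s = -1)"

end

theory Submission
  imports Defs
begin

text \<open>Modulo 2 the rows of Pascal's rhombus obey a doubling rule, giving recurrences for
  \<open>x, y, z\<close> at \<open>2n\<close> and \<open>2n+1\<close> in terms of their values near \<open>n\<close>. Splitting each Dirichlet
  series by the parity of \<open>n\<close> and inserting these recurrences produces series with shifted
  denominators \<open>(n + b)\<^bsup>-s\<^esup>\<close>, \<open>b \<in> {1, \<plusminus>1/2}\<close>. Expanding \<open>(1 + b/n)\<^bsup>-s\<^esup>\<close> binomially shows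
  that such a series differs from the unshifted one by \<open>\<Sigma>(s, b, \<D>)\<close>, and this difference is
  analytic on \<open>Re s > 1\<close> although the shifted series converge only for \<open>Re s > 2\<close>. Cramer's rule
  for the resulting \<open>3 \<times> 3\<close> system therefore continues \<open>\<X>, \<Y>, \<Z>\<close> to \<open>Re s > 1\<close>, with poles
  only at zeros of \<open>det C = (1 + 2u)(1 - 3u - 2u\<^sup>2)\<close>, \<open>u = 2\<^bsup>-s\<^esup>\<close>. As \<open>|u| < 1/2\<close> there,
  these are the simple zeros \<open>u = (\<surd>17 - 3)/4\<close>, i.e. \<open>s = \<kappa> + 2\<pi>i\<ell>/log 2\<close>.\<close>

section \<open>Pascal's rhombus modulo 2\<close>

definition rh_odd :: "nat \<Rightarrow> int \<Rightarrow> bool" where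
  "rh_odd n j \<longleftrightarrow> odd (rh n j)"

lemma rh_odd_0 [simp]: "\<not> rh_odd 0 j"
  by (simp add: rh_odd_def)

lemma rh_odd_1: "rh_odd (Suc 0) j \<longleftrightarrow> j = 0"
  by (simp add: rh_odd_def)

lemma rh_odd_Suc_Suc:
  "rh_odd (Suc (Suc i)) j
     = (rh_odd (Suc i) (j - 1) \<noteq> (rh_odd (Suc i) j \<noteq> (rh_odd (Suc i) (j + 1) \<noteq> rh_odd i j)))"
  by (auto simp: rh_odd_def)

lemma rh_eq_0_outside: "int n \<le> \<bar>j\<bar> \<Longrightarrow> rh n j = 0"
proof (induction n j rule: rh.induct)
  case (3 i j)
  then show ?case by (simp del: rh.simps add: rh.simps(3))
qed auto

lemma rh_odd_abs_less: "rh_odd n j \<Longrightarrow> \<bar>j\<bar> < int n"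
  using rh_eq_0_outside[of n j] by (force simp: rh_odd_def)

lemma rh_odd_subset_interval: "{j. rh_odd n j} \<subseteq> {- int n..int n}"
  by (auto dest!: rh_odd_abs_less simp: abs_less_iff)

lemma finite_rh_odd: "finite {j. rh_odd n j}"
  using finite_subset[OF rh_odd_subset_interval] by blast

text \<open>In terms of the row polynomials \<open>R n t = (\<Sum>j. rh n j * t ^ j)\<close>, these are the
  congruences \<open>R (2n) t = (t\<^sup>-\<^sup>1 + 1 + t) R n (t\<^sup>2)\<close> and \<open>R (2n+1) t = R (n+1) (t\<^sup>2) + R n (t\<^sup>2)\<close>
  modulo 2.\<close>

lemma rh_odd_doubling:
  "rh_odd (2*n) (2*j) = rh_odd n j \<and> rh_odd (2*n) (2*j+1) = (rh_odd n j \<noteq> rh_odd n (j+1))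
   \<and> rh_odd (2*n+1) (2*j) = (rh_odd (n+1) j \<noteq> rh_odd n j) \<and> \<not> rh_odd (2*n+1) (2*j+1)"
proof (induction n arbitrary: j)
  case 0
  then show ?case by (auto simp: rh_odd_1) presburger+
next
  case (Suc n)
  have even_even: "rh_odd (2*n+2) (2*k) = rh_odd (n+1) k" for k
  proof -
    have "rh_odd (2*n+2) (2*k) = (rh_odd (2*n+1) (2*(k-1)+1) \<noteq> (rh_odd (2*n+1) (2*k)
        \<noteq> (rh_odd (2*n+1) (2*k+1) \<noteq> rh_odd (2*n) (2*k))))"
      using rh_odd_Suc_Suc[of "2*n" "2*k"] by (simp add: algebra_simps numeral_2_eq_2)
    then show ?thesis using Suc.IH[of k] Suc.IH[of "k-1"] by auto
  qed
  have even_odd: "rh_odd (2*n+2) (2*k+1) = (rh_odd (n+1) k \<noteq> rh_odd (n+1) (k+1))" for k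
  proof -
    have "rh_odd (2*n+2) (2*k+1) = (rh_odd (2*n+1) (2*k) \<noteq> (rh_odd (2*n+1) (2*k+1)
        \<noteq> (rh_odd (2*n+1) (2*(k+1)) \<noteq> rh_odd (2*n) (2*k+1))))"
      using rh_odd_Suc_Suc[of "2*n" "2*k+1"] by (simp add: algebra_simps numeral_2_eq_2)
    then show ?thesis using Suc.IH[of k] Suc.IH[of "k+1"] by auto
  qed
  have odd_even: "rh_odd (2*n+3) (2*j) = (rh_odd (n+2) j \<noteq> rh_odd (n+1) j)"
  proof -
    have "rh_odd (2*n+3) (2*j) = (rh_odd (2*n+2) (2*(j-1)+1) \<noteq> (rh_odd (2*n+2) (2*j)
        \<noteq> (rh_odd (2*n+2) (2*j+1) \<noteq> rh_odd (2*n+1) (2*j))))"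
      using rh_odd_Suc_Suc[of "2*n+1" "2*j"] by (simp add: algebra_simps numeral_2_eq_2 numeral_3_eq_3)
    moreover have "rh_odd (n+2) j = (rh_odd (n+1) (j-1) \<noteq> (rh_odd (n+1) j \<noteq> (rh_odd (n+1) (j+1) \<noteq> rh_odd n j)))"
      using rh_odd_Suc_Suc[of n j] by (simp add: numeral_2_eq_2)
    ultimately show ?thesis
      using Suc.IH[of j] even_even[of j] even_odd[of j] even_odd[of "j-1"] by auto
  qed
  have odd_odd: "\<not> rh_odd (2*n+3) (2*j+1)"
  proof -
    have "rh_odd (2*n+3) (2*j+1) = (rh_odd (2*n+2) (2*j) \<noteq> (rh_odd (2*n+2) (2*j+1)
        \<noteq> (rh_odd (2*n+2) (2*(j+1)) \<noteq> rh_odd (2*n+1) (2*j+1))))"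
      using rh_odd_Suc_Suc[of "2*n+1" "2*j+1"] by (simp add: algebra_simps numeral_2_eq_2 numeral_3_eq_3)
    then show ?thesis using Suc.IH[of j] even_even[of j] even_odd[of j] even_even[of "j+1"] by auto
  qed
  show ?case using even_even even_odd odd_even odd_odd by (simp add: algebra_simps numeral_3_eq_3)
qed

lemma rh_odd_double_even [simp]: "rh_odd (2*n) (2*j) = rh_odd n j"
  and rh_odd_double_odd [simp]: "rh_odd (2*n) (2*j+1) = (rh_odd n j \<noteq> rh_odd n (j+1))"
  and rh_odd_double_Suc_even [simp]: "rh_odd (2*n+1) (2*j) = (rh_odd (n+1) j \<noteq> rh_odd n j)"
  and rh_odd_double_Suc_odd [simp]: "\<not> rh_odd (2*n+1) (2*j+1)"
  using rh_odd_doubling[of n j] by auto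

lemma rh_odd_Suc_double_even [simp]: "rh_odd (Suc (2*n)) (2*j) = (rh_odd (Suc n) j \<noteq> rh_odd n j)"
  and rh_odd_Suc_double_odd [simp]: "\<not> rh_odd (Suc (2*n)) (2*j+1)"
  using rh_odd_doubling[of n j] by auto

lemma rh_odd_double_pred_odd [simp]: "rh_odd (2*n) (2*j-1) = (rh_odd n (j-1) \<noteq> rh_odd n j)"
  using rh_odd_double_odd[of n "j-1"] by (simp add: algebra_simps)

lemma card_even_odd_split:
  assumes "finite {k::int. P k}"
  shows "card {k. P k} = card {i. P (2*i)} + card {i. P (2*i+1)}"
proof -
  have "finite {i. P (2*i)}"
    by (rule finite_imageD[of "\<lambda>i. 2*i"]) (auto intro: finite_subset[OF _ assms] simp: inj_on_def)
  moreover have "finite {i. P (2*i+1)}"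
    by (rule finite_imageD[of "\<lambda>i. 2*i+1"]) (auto intro: finite_subset[OF _ assms] simp: inj_on_def)
  moreover have "{k. P k} = (\<lambda>i. 2*i) ` {i. P (2*i)} \<union> (\<lambda>i. 2*i+1) ` {i. P (2*i+1)}"
    by (auto simp: image_iff) (metis dvd_mult_div_cancel odd_two_times_div_two_succ)
  moreover have "(\<lambda>i. 2*i) ` {i. P (2*i)} \<inter> (\<lambda>i. 2*i+1) ` {i. P (2*i+1)} = {}"
    by auto presburger
  ultimately show ?thesis
    by (simp add: card_Un_disjoint card_image inj_on_def)
qed

lemma card_translate: "card {j::int. P (j + c)} = card {j. P j}"
proof -
  have "{j. P (j + c)} = (\<lambda>j. j - c) ` {j. P j}"
    by (auto simp: image_iff) (metis add_diff_cancel)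
  then show ?thesis by (simp add: card_image inj_on_def)
qed

lemma finite_rh_odd_xor: "finite {k. rh_odd m k \<noteq> rh_odd m' k}"
  by (rule finite_subset[of _ "{k. rh_odd m k} \<union> {k. rh_odd m' k}"]) (auto simp: finite_rh_odd)

lemma finite_rh_odd_change: "finite {k. rh_odd m k \<noteq> rh_odd m (k+1)}"
proof -
  have "{k. rh_odd m k \<noteq> rh_odd m (k+1)} \<subseteq> (\<lambda>k. k-1) ` {k. rh_odd m k} \<union> {k. rh_odd m k}"
    by (auto simp: image_iff) (metis add_diff_cancel)
  then show ?thesis by (rule finite_subset) (auto simp: finite_rh_odd)
qed

lemma xr_eq_card: "xr n = card {j. rh_odd n j}"
  by (simp add: xr_def rh_odd_def)

lemma yr_eq_card: "yr n = card {j. rh_odd (2*n-1) (2*j)}"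
  by (simp add: yr_def rh_odd_def)

lemma zr_eq_card_changes: "zr n = card {i. rh_odd n i \<noteq> rh_odd n (i+1)}"
proof -
  have "zr n = card {j. rh_odd (2*n) (2*j-1)}"
    by (simp add: zr_def rh_odd_def)
  also have "\<dots> = card {j. rh_odd n (j + -1) \<noteq> rh_odd n (j + -1 + 1)}"
    by simp
  also have "\<dots> = card {i. rh_odd n i \<noteq> rh_odd n (i+1)}"
    by (rule card_translate[of "\<lambda>i. rh_odd n i \<noteq> rh_odd n (i+1)"])
  finally show ?thesis .
qed

lemma xr_double: "xr (2*n) = xr n + zr n"
  unfolding xr_eq_card[of "2*n"] zr_eq_card_changes
  by (subst card_even_odd_split) (auto simp: finite_rh_odd xr_eq_card)

lemma xr_double_Suc: "xr (2*n+1) = yr (n+1)"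
  unfolding xr_eq_card yr_eq_card
  by (subst card_even_odd_split[OF finite_rh_odd]) simp

lemma yr_double:
  assumes "n \<ge> 1" shows "yr (2*n) = zr n + xr (n-1)"
proof -
  obtain m where m: "n = m + 1" using assms by (metis add.commute le_Suc_ex)
  have "yr (2*n) = card {j. rh_odd (2*(2*m+1)+1) (2*j)}"
    unfolding yr_eq_card m by (simp add: algebra_simps)
  also have "\<dots> = card {j. rh_odd (2*m+2) j \<noteq> rh_odd (2*m+1) j}"
    unfolding rh_odd_double_Suc_even by (simp add: algebra_simps)
  also have "\<dots> = card {i. rh_odd (2*m+2) (2*i) \<noteq> rh_odd (2*m+1) (2*i)}
      + card {i. rh_odd (2*m+2) (2*i+1) \<noteq> rh_odd (2*m+1) (2*i+1)}"
    by (rule card_even_odd_split[OF finite_rh_odd_xor])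
  also have "{i. rh_odd (2*m+2) (2*i) \<noteq> rh_odd (2*m+1) (2*i)} = {i. rh_odd m i}"
    using rh_odd_double_even[of "Suc m", simplified] by auto
  also have "{i. rh_odd (2*m+2) (2*i+1) \<noteq> rh_odd (2*m+1) (2*i+1)}
      = {i. rh_odd (m+1) i \<noteq> rh_odd (m+1) (i+1)}"
    using rh_odd_double_odd[of "Suc m", simplified] by auto
  finally show ?thesis by (simp add: m xr_eq_card zr_eq_card_changes)
qed

lemma yr_double_Suc: "yr (2*n+1) = zr n + xr (n+1)"
proof -
  have "yr (2*n+1) = card {j. rh_odd (2*(2*n)+1) (2*j)}"
    unfolding yr_eq_card by (simp add: algebra_simps)
  also have "\<dots> = card {j. rh_odd (2*n+1) j \<noteq> rh_odd (2*n) j}"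
    unfolding rh_odd_double_Suc_even by (simp add: algebra_simps)
  also have "\<dots> = card {i. rh_odd (2*n+1) (2*i) \<noteq> rh_odd (2*n) (2*i)}
      + card {i. rh_odd (2*n+1) (2*i+1) \<noteq> rh_odd (2*n) (2*i+1)}"
    by (rule card_even_odd_split[OF finite_rh_odd_xor])
  also have "{i. rh_odd (2*n+1) (2*i) \<noteq> rh_odd (2*n) (2*i)} = {i. rh_odd (n+1) i}"
    by auto
  also have "{i. rh_odd (2*n+1) (2*i+1) \<noteq> rh_odd (2*n) (2*i+1)} = {i. rh_odd n i \<noteq> rh_odd n (i+1)}"
    by auto
  finally show ?thesis by (simp add: xr_eq_card zr_eq_card_changes)
qed

lemma zr_double: "zr (2*n) = 2 * xr n"
proof -
  have "zr (2*n) = card {i. rh_odd (2*n) (2*i) \<noteq> rh_odd (2*n) (2*i+1)}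
      + card {i. rh_odd (2*n) (2*i+1) \<noteq> rh_odd (2*n) (2*i+1+1)}"
    unfolding zr_eq_card_changes by (rule card_even_odd_split[OF finite_rh_odd_change])
  also have "{i. rh_odd (2*n) (2*i) \<noteq> rh_odd (2*n) (2*i+1)} = {i. rh_odd n (i+1)}"
    by auto
  also have "{i. rh_odd (2*n) (2*i+1) \<noteq> rh_odd (2*n) (2*i+1+1)} = {i. rh_odd n i}"
  proof -
    have "rh_odd (2*n) (2*i+1+1) = rh_odd n (i+1)" for i
      using rh_odd_double_even[of n "i+1"] by (simp add: algebra_simps)
    then show ?thesis by auto
  qed
  finally show ?thesis by (simp add: xr_eq_card card_translate)
qed

lemma zr_double_Suc: "zr (2*n+1) = 2 * yr (n+1)"
proof -
  have "zr (2*n+1) = card {i. rh_odd (2*n+1) (2*i) \<noteq> rh_odd (2*n+1) (2*i+1)}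
      + card {i. rh_odd (2*n+1) (2*i+1) \<noteq> rh_odd (2*n+1) (2*i+1+1)}"
    unfolding zr_eq_card_changes by (rule card_even_odd_split[OF finite_rh_odd_change])
  also have "{i. rh_odd (2*n+1) (2*i) \<noteq> rh_odd (2*n+1) (2*i+1)} = {i. rh_odd (2*n+1) (2*i)}"
    by auto
  also have "{i. rh_odd (2*n+1) (2*i+1) \<noteq> rh_odd (2*n+1) (2*i+1+1)} = {i. rh_odd (2*n+1) (2*(i+1))}"
  proof -
    have h: "2*i+1+1 = 2*(i+1)" for i :: int by simp
    show ?thesis unfolding h by simp
  qed
  also have "card {i. rh_odd (2*n+1) (2*(i+1))} = card {i. rh_odd (2*n+1) (2*i)}"
    by (rule card_translate[of "\<lambda>i. rh_odd (2*n+1) (2*i)" 1])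
  finally show ?thesis by (simp add: yr_eq_card)
qed

lemma card_le_of_subset_interval: "A \<subseteq> {- int n..int n} \<Longrightarrow> card A \<le> 2*n+1"
  using card_mono[of "{- int n..int n}" A] by simp

lemma xr_le: "xr n \<le> 2*n+1"
  unfolding xr_eq_card by (rule card_le_of_subset_interval[OF rh_odd_subset_interval])

lemma yr_le: "yr n \<le> 2*n+1"
  unfolding yr_eq_card
  by (rule card_le_of_subset_interval) (auto dest!: rh_odd_abs_less simp: abs_less_iff)

lemma zr_le: "zr n \<le> 2*n+1"
  unfolding zr_eq_card_changes
  by (rule card_le_of_subset_interval) (auto dest!: rh_odd_abs_less simp: abs_less_iff)

section \<open>Dirichlet series with shifted denominators\<close>

definition linear_growth :: "(nat \<Rightarrow> nat) \<Rightarrow> bool" where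
  "linear_growth a \<longleftrightarrow> (\<forall>n. a n \<le> 2*n+1)"

lemma linear_growth_rhombus: "linear_growth xr" "linear_growth yr" "linear_growth zr"
  using xr_le yr_le zr_le by (auto simp: linear_growth_def)

definition shifted_term :: "(nat \<Rightarrow> nat) \<Rightarrow> real \<Rightarrow> complex \<Rightarrow> nat \<Rightarrow> complex" where
  "shifted_term a b s n = of_nat (a n) * of_real (real n + b) powr (-s)"

definition shifted_dser :: "(nat \<Rightarrow> nat) \<Rightarrow> nat \<Rightarrow> real \<Rightarrow> complex \<Rightarrow> complex" where
  "shifted_dser a n0 b s = infsum (shifted_term a b s) {n0..}"

text \<open>Each shifted series needs \<open>Re s > 2\<close>, but the termwise difference is
  \<open>O(\<bar>s\<bar> n\<^bsup>-Re s\<^esup>)\<close>, so this series is analytic on \<open>Re s > 1\<close>.\<close>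

definition shift_correction :: "(nat \<Rightarrow> nat) \<Rightarrow> nat \<Rightarrow> real \<Rightarrow> complex \<Rightarrow> complex" where
  "shift_correction a n0 b s =
     (\<Sum>n. if n0 \<le> n then shifted_term a b s n - shifted_term a 0 s n else 0)"

lemma linear_growth_le:
  assumes "linear_growth a" "n \<ge> 1" shows "real (a n) \<le> 3 * real n"
proof -
  have "a n \<le> 3 * n" using assms by (auto simp: linear_growth_def intro: order_trans)
  then show ?thesis by (metis of_nat_le_iff of_nat_mult of_nat_numeral)
qed

lemma norm_of_real_powr: "x \<ge> 0 \<Longrightarrow> norm (complex_of_real x powr s) = x powr Re s"
  by (subst norm_powr_real_powr) auto

lemma shifted_term_0: "n \<ge> 1 \<Longrightarrow> shifted_term a 0 s n = of_nat (a n) / of_nat n powr s"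
  by (simp add: shifted_term_def powr_minus divide_inverse)

lemma shifted_powr_le:
  assumes "real n \<ge> 2" "\<bar>b\<bar> \<le> 1" "\<sigma> \<le> r" "0 \<le> \<sigma>"
  shows "(real n + b) powr (- r) \<le> 2 powr \<sigma> * real n powr (- \<sigma>)"
proof -
  have pos: "real n + b \<ge> real n / 2" using assms(1,2) by (simp add: abs_le_iff)
  have "(real n + b) powr (- r) \<le> (real n + b) powr (- \<sigma>)"
    using pos assms by (intro powr_mono) auto
  also have "\<dots> \<le> (real n / 2) powr (- \<sigma>)"
    using pos assms by (intro powr_mono2') auto
  also have "\<dots> = 2 powr \<sigma> * real n powr (- \<sigma>)"
    using assms(1) by (simp add: powr_divide powr_minus divide_simps)
  finally show ?thesis .
qed

lemma norm_shifted_term_le: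
  assumes "linear_growth a" "\<bar>b\<bar> \<le> 1" "n \<ge> 2" "\<sigma> \<le> Re s" "0 \<le> \<sigma>"
  shows "norm (shifted_term a b s n) \<le> 3 * 2 powr \<sigma> * real n powr (1 - \<sigma>)"
proof -
  have n2: "real n \<ge> 2" using assms(3) by simp
  have "real n + b \<ge> 0" using assms(2) n2 by (simp add: abs_le_iff)
  then have "norm (shifted_term a b s n) = real (a n) * (real n + b) powr (- Re s)"
    using norm_of_real_powr[of "real n + b" "-s"] by (simp add: shifted_term_def norm_mult del: of_real_add)
  also have "\<dots> \<le> (3 * real n) * (2 powr \<sigma> * real n powr (- \<sigma>))"
    using linear_growth_le[OF assms(1), of n] assms shifted_powr_le[OF n2 assms(2,4,5)]
    by (intro mult_mono) auto
  also have "\<dots> = 3 * 2 powr \<sigma> * real n powr (1 - \<sigma>)"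
    using n2 by (simp add: powr_diff powr_minus divide_inverse)
  finally show ?thesis .
qed

lemma shifted_term_abs_summable:
  assumes "linear_growth a" "\<bar>b\<bar> \<le> 1" "n0 \<ge> 2" "2 < Re s"
  shows "(\<lambda>n. norm (shifted_term a b s n)) summable_on {n0..}"
proof (rule Infinite_Sum.abs_summable_on_comparison_test')
  have "summable (\<lambda>n::nat. (3 * 2 powr Re s) * real n powr (1 - Re s))"
    using assms(4) by (intro summable_mult) (simp add: summable_real_powr_iff)
  then have "(\<lambda>n::nat. (3 * 2 powr Re s) * real n powr (1 - Re s)) summable_on UNIV"
    by (subst summable_on_UNIV_nonneg_real_iff) auto
  then show "(\<lambda>n::nat. (3 * 2 powr Re s) * real n powr (1 - Re s)) summable_on {n0..}"
    by (rule summable_on_subset_banach) auto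
  show "norm (shifted_term a b s n) \<le> 3 * 2 powr Re s * real n powr (1 - Re s)" if "n \<in> {n0..}" for n
    using norm_shifted_term_le[OF assms(1,2), of n "Re s" s] assms that by auto
qed

lemma has_sum_shifted_dser:
  assumes "linear_growth a" "\<bar>b\<bar> \<le> 1" "n0 \<ge> 2" "2 < Re s"
  shows "(shifted_term a b s has_sum shifted_dser a n0 b s) {n0..}"
  using shifted_term_abs_summable[OF assms]
  by (simp add: shifted_dser_def summable_on_iff_abs_summable_on_complex)

lemma has_sum_diff:
  fixes f g :: "'a \<Rightarrow> 'b::topological_ab_group_add"
  assumes "(f has_sum S) A" "(g has_sum T) A"
  shows "((\<lambda>x. f x - g x) has_sum (S - T)) A"
  using has_sum_add[OF assms(1), of "\<lambda>x. - g x" "- T"] assms(2) by (simp add: has_sum_uminus)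

lemma suminf_if_atLeast_eq:
  fixes f :: "nat \<Rightarrow> 'a::{topological_comm_monoid_add, t2_space}"
  assumes "(f has_sum S) {n0..}"
  shows "(\<Sum>n. if n0 \<le> n then f n else 0) = S"
proof -
  have "((\<lambda>n. if n0 \<le> n then f n else 0) has_sum S) UNIV"
    using assms by (subst has_sum_cong_neutral[where T = "{n0..}"]) auto
  then show ?thesis by (metis has_sum_imp_sums sums_unique)
qed

lemma dser_eq_shifted_dser:
  assumes "linear_growth a" "n0 \<ge> 2" "2 < Re s"
  shows "dser a n0 s = shifted_dser a n0 0 s"
proof -
  have "((\<lambda>n. of_nat (a n) / of_nat n powr s) has_sum shifted_dser a n0 0 s) {n0..}"
    using has_sum_shifted_dser[OF assms(1) _ assms(2,3), of 0] assms(2)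
    by (subst has_sum_cong[where g = "shifted_term a 0 s"]) (auto simp: shifted_term_0)
  then show ?thesis unfolding dser_def by (rule suminf_if_atLeast_eq)
qed

lemma shift_correction_eq:
  assumes "linear_growth a" "\<bar>b\<bar> \<le> 1" "n0 \<ge> 2" "2 < Re s"
  shows "shift_correction a n0 b s = shifted_dser a n0 b s - shifted_dser a n0 0 s"
  unfolding shift_correction_def
  using has_sum_diff[OF has_sum_shifted_dser[OF assms] has_sum_shifted_dser[OF assms(1) _ assms(3,4), of 0]]
  by (intro suminf_if_atLeast_eq) simp

lemma summable_norm_gchoose_power:
  fixes z w :: complex
  assumes "norm z < 1"
  shows "summable (\<lambda>k. norm ((w gchoose k) * z ^ k))"
  using assms by (intro abs_summable_in_conv_radius) (simp add: conv_radius_gchoose)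

lemma has_sum_gchoose_power_Suc:
  fixes z w :: complex
  assumes "norm z < 1"
  shows "((\<lambda>k. (w gchoose Suc k) * z ^ Suc k) has_sum ((1 + z) powr w - 1)) UNIV"
proof (rule norm_summable_imp_has_sum)
  show "summable (\<lambda>k. norm ((w gchoose Suc k) * z ^ Suc k))"
    using summable_norm_gchoose_power[OF assms] by (subst summable_Suc_iff)
  show "(\<lambda>k. (w gchoose Suc k) * z ^ Suc k) sums ((1 + z) powr w - 1)"
    using gen_binomial_complex[OF assms, of w] by (subst sums_Suc_iff) simp
qed

lemma powr_of_real_add_split:
  assumes "real n \<ge> 2" "\<bar>b\<bar> \<le> 1"
  shows "complex_of_real (real n + b) powr s = of_nat n powr s * (1 + complex_of_real (b / real n)) powr s"
proof -
  have "complex_of_real (real n + b) = complex_of_real (real n) * complex_of_real (1 + b / real n)"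
    using assms by (simp add: field_simps)
  also have "\<dots> powr s = complex_of_real (real n) powr s * complex_of_real (1 + b / real n) powr s"
    using assms by (intro powr_times_real) (auto simp: abs_le_iff field_simps)
  finally show ?thesis by simp
qed

lemma shifted_term_0_add_nat:
  assumes "n \<ge> 1"
  shows "shifted_term a 0 (s + of_nat m) n = shifted_term a 0 s n / of_nat n ^ m"
proof -
  have "complex_of_nat n powr (- (s + of_nat m)) = of_nat n powr (-s) * of_nat n powr (- of_nat m)"
    by (subst powr_add[symmetric]) simp
  also have "of_nat n powr (- of_nat m) = inverse (of_nat n ^ m :: complex)"
    using assms by (simp add: powr_minus)
  finally show ?thesis by (simp add: shifted_term_def divide_inverse mult.assoc)
qed

text \<open>The binomial series of \<open>(1 + b/n)\<^bsup>-s\<^esup>\<close>, written so that the \<open>k\<close>-th term is a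
  term of the unshifted series at \<open>s + k\<close>.\<close>

lemma shifted_term_binomial_expansion:
  assumes n: "real n \<ge> 2" and b: "\<bar>b\<bar> \<le> 1"
  shows "((\<lambda>k. ((-s) gchoose Suc k) * of_real b ^ Suc k * shifted_term a 0 (s + of_nat (Suc k)) n)
           has_sum (shifted_term a b s n - shifted_term a 0 s n)) UNIV"
proof -
  let ?z = "complex_of_real (b / real n)"
  have "norm ?z \<le> 1/2"
    by (simp only: norm_of_real) (use n b in \<open>simp add: abs_div field_simps\<close>)
  then have "((\<lambda>k. shifted_term a 0 s n * (((-s) gchoose Suc k) * ?z ^ Suc k))
      has_sum (shifted_term a 0 s n * ((1 + ?z) powr (-s) - 1))) UNIV"
    by (intro has_sum_cmult_right has_sum_gchoose_power_Suc) simp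
  moreover have "shifted_term a 0 s n * ((1 + ?z) powr (-s) - 1) = shifted_term a b s n - shifted_term a 0 s n"
    using powr_of_real_add_split[OF n b, of "-s"] by (simp add: shifted_term_def algebra_simps)
  moreover have "shifted_term a 0 s n * (((-s) gchoose Suc k) * ?z ^ Suc k)
      = ((-s) gchoose Suc k) * of_real b ^ Suc k * shifted_term a 0 (s + of_nat (Suc k)) n" for k
    using n shifted_term_0_add_nat[of n a s "Suc k"] by (simp add: power_divide field_simps)
  ultimately show ?thesis by simp
qed

lemma abs_summable_on_Times_bound:
  fixes F :: "'a \<times> 'b \<Rightarrow> complex" and g :: "'a \<Rightarrow> real" and h :: "'b \<Rightarrow> real"
  assumes g: "g summable_on A" and h: "h summable_on B"
    and bound: "\<And>x y. x \<in> A \<Longrightarrow> y \<in> B \<Longrightarrow> norm (F (x, y)) \<le> g x * h y"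
  shows "(\<lambda>p. norm (F p)) summable_on (A \<times> B)"
proof (subst Infinite_Sum.abs_summable_on_Sigma_iff, intro conjI ballI)
  show inner: "(\<lambda>y. norm (F (x, y))) summable_on B" if "x \<in> A" for x
    using summable_on_cmult_right[OF h] bound[OF that]
    by (rule Infinite_Sum.abs_summable_on_comparison_test')
  have "norm (infsum (\<lambda>y. norm (F (x, y))) B) \<le> g x * infsum h B" if "x \<in> A" for x
  proof -
    have "norm (infsum (\<lambda>y. norm (F (x, y))) B) = infsum (\<lambda>y. norm (F (x, y))) B"
      by (simp add: infsum_nonneg)
    also have "\<dots> \<le> infsum (\<lambda>y. g x * h y) B"
      using inner[OF that] summable_on_cmult_right[OF h] bound[OF that] by (rule infsum_mono)
    also have "\<dots> = g x * infsum h B"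
      using h by (rule infsum_cmult_right)
    finally show ?thesis .
  qed
  with summable_on_cmult_left[OF g]
  show "(\<lambda>x. norm (infsum (\<lambda>y. norm (F (x, y))) B)) summable_on A"
    by (rule Infinite_Sum.abs_summable_on_comparison_test')
qed

lemma binomial_family_abs_summable:
  assumes a: "linear_growth a" and b: "\<bar>b\<bar> \<le> 1" and n0: "n0 \<ge> 2" and s: "2 < Re s"
  defines "F \<equiv> \<lambda>(n, k). ((-s) gchoose Suc k) * of_real b ^ Suc k * shifted_term a 0 (s + of_nat (Suc k)) n"
  shows "(\<lambda>p. norm (F p)) summable_on ({n0..} \<times> UNIV)"
proof (rule abs_summable_on_Times_bound)
  show "(\<lambda>n. norm (shifted_term a 0 s n)) summable_on {n0..}"
    using shifted_term_abs_summable[OF a _ n0 s] by simp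
  have "summable (\<lambda>k. norm (((-s) gchoose Suc k) * (1/2::complex) ^ Suc k))"
    using summable_norm_gchoose_power[of "1/2" "-s"] by (subst summable_Suc_iff) simp
  then show "(\<lambda>k. norm (((-s) gchoose Suc k) * (1/2::complex) ^ Suc k)) summable_on UNIV"
    by (subst summable_on_UNIV_nonneg_real_iff) auto
  fix n k assume "n \<in> {n0..}"
  then have n: "real n \<ge> 2" using n0 by simp
  have "\<bar>b\<bar> / real n \<le> 1/2" using n b by (simp add: field_simps)
  then have "(\<bar>b\<bar> / real n) ^ Suc k \<le> (1/2) ^ Suc k" by (rule power_mono) simp
  then have bk: "\<bar>b\<bar> ^ Suc k / real n ^ Suc k \<le> (1/2) ^ Suc k" by (simp only: power_divide)
  have "norm (F (n, k))
      = norm ((-s) gchoose Suc k) * (\<bar>b\<bar> ^ Suc k / real n ^ Suc k) * norm (shifted_term a 0 s n)"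
    using n shifted_term_0_add_nat[of n a s "Suc k"]
    by (simp add: F_def norm_mult norm_divide norm_power del: power_Suc)
  also have "\<dots> \<le> norm ((-s) gchoose Suc k) * (1/2) ^ Suc k * norm (shifted_term a 0 s n)"
    using bk by (intro mult_right_mono mult_left_mono) auto
  finally show "norm (F (n, k))
      \<le> norm (shifted_term a 0 s n) * norm (((-s) gchoose Suc k) * (1/2::complex) ^ Suc k)"
    by (simp add: norm_mult norm_power mult_ac del: power_Suc)
qed

lemma Sig_dser_eq:
  assumes a: "linear_growth a" and b: "\<bar>b\<bar> \<le> 1" and n0: "n0 \<ge> 2" and s: "2 < Re s"
  shows "Sig s (of_real b) (dser a n0) = shifted_dser a n0 b s - shifted_dser a n0 0 s"
proof -
  define c where "c k = ((-s) gchoose Suc k) * of_real b ^ Suc k" for k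
  define F where "F = (\<lambda>(n, k). c k * shifted_term a 0 (s + of_nat (Suc k)) n)"
  have rows: "((\<lambda>k. F (n, k)) has_sum (shifted_term a b s n - shifted_term a 0 s n)) UNIV"
    if "n \<in> {n0..}" for n
    using shifted_term_binomial_expansion[OF _ b, of n s a] that n0 by (simp add: F_def c_def)
  have cols: "((\<lambda>n. F (n, k)) has_sum c k * dser a n0 (s + of_nat (Suc k))) {n0..}" for k
  proof -
    have "2 < Re (s + of_nat (Suc k))" using s by simp
    then show ?thesis
      using has_sum_shifted_dser[OF a _ n0, of 0] dser_eq_shifted_dser[OF a n0]
      by (simp add: F_def has_sum_cmult_right)
  qed
  have "F summable_on ({n0..} \<times> UNIV)"
    using binomial_family_abs_summable[OF a b n0 s] unfolding F_def c_def
    by (simp add: summable_on_iff_abs_summable_on_complex)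
  then obtain S where S: "(F has_sum S) ({n0..} \<times> UNIV)"
    by (auto simp: summable_on_def)
  have "S = shifted_dser a n0 b s - shifted_dser a n0 0 s"
    using has_sum_SigmaD[OF S rows] has_sum_diff[OF has_sum_shifted_dser[OF a b n0 s]
      has_sum_shifted_dser[OF a _ n0 s, of 0]]
    by (auto intro: has_sum_unique)
  moreover have "((\<lambda>k. c k * dser a n0 (s + of_nat (Suc k))) has_sum S) UNIV"
  proof (rule has_sum_SigmaD)
    show "((\<lambda>(k, n). F (n, k)) has_sum S) (UNIV \<times> {n0..})"
      using S has_sum_swap[of F "{n0..}" UNIV S] by simp
    show "((\<lambda>n. (\<lambda>(k, n). F (n, k)) (k, n)) has_sum c k * dser a n0 (s + of_nat (Suc k))) {n0..}" for k
      using cols[of k] by (simp only: case_prod_conv)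
  qed
  ultimately show ?thesis
    unfolding Sig_def c_def by (metis has_sum_imp_sums sums_unique)
qed

lemma abs_ln_one_plus_le:
  fixes x :: real
  assumes "\<bar>x\<bar> \<le> 1/2"
  shows "\<bar>ln (1 + x)\<bar> \<le> 2 * \<bar>x\<bar>"
proof -
  have "\<bar>ln (1 + x) - x\<bar> \<le> 2 * x\<^sup>2" by (rule abs_ln_one_plus_x_minus_x_bound[OF assms])
  moreover have "2 * x\<^sup>2 \<le> \<bar>x\<bar>"
    using mult_right_mono[of "2 * \<bar>x\<bar>" 1 "\<bar>x\<bar>"] assms by (simp add: power2_eq_square abs_mult_self)
  ultimately show ?thesis by linarith
qed

lemma norm_one_plus_powr_minus_one_le:
  fixes x :: real and s :: complex
  assumes x: "\<bar>x\<bar> \<le> 1/2" and small: "2 * norm s * \<bar>x\<bar> \<le> 1/2"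
  shows "norm ((1 + of_real x) powr s - 1) \<le> 3 * norm s * \<bar>x\<bar>"
proof -
  define w where "w = s * of_real (ln (1 + x))"
  have "1 + x > 0" using x by (simp add: abs_le_iff)
  moreover have "1 + complex_of_real x = of_real (1 + x)" by simp
  ultimately have "(1 + of_real x) powr s = exp w"
    by (simp add: w_def powr_def Ln_of_real mult.commute del: of_real_add)
  moreover have nw: "norm w \<le> 2 * norm s * \<bar>x\<bar>"
    using mult_left_mono[OF abs_ln_one_plus_le[OF x], of "norm s"] by (simp add: w_def norm_mult)
  moreover have "norm (exp w - 1) \<le> 3/2 * norm w"
    using nw small by (intro norm_exp_bounds(2)) simp
  ultimately show ?thesis by simp
qed

lemma norm_shifted_term_diff_le:
  assumes a: "linear_growth a" and b: "\<bar>b\<bar> \<le> 1" and n: "real n \<ge> 2" "real n \<ge> 4 * R"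
    and s: "\<sigma> \<le> Re s" "0 \<le> \<sigma>" "norm s \<le> R"
  shows "norm (shifted_term a b s n - shifted_term a 0 s n) \<le> 9 * R * real n powr (- \<sigma>)"
proof -
  define x where "x = b / real n"
  have x: "\<bar>x\<bar> \<le> 1 / real n" using b n by (simp add: x_def abs_div divide_right_mono)
  have R: "R \<ge> 0" using s(3) norm_ge_zero order_trans by blast
  have "norm (- s) * \<bar>x\<bar> \<le> R / real n"
    using mult_mono[OF s(3) x] R by simp
  also have "\<dots> \<le> 1/4" using n by (simp add: field_simps)
  finally have small: "2 * norm (- s) * \<bar>x\<bar> \<le> 1/2" by simp
  have "1 / real n \<le> 1/2" using n by simp
  with x have "\<bar>x\<bar> \<le> 1/2" by linarith
  note bound = norm_one_plus_powr_minus_one_le[OF this small]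
  have diff: "shifted_term a b s n - shifted_term a 0 s n
      = of_nat (a n) * of_nat n powr (-s) * ((1 + of_real x) powr (-s) - 1)"
    using powr_of_real_add_split[OF n(1) b, of "-s"] by (simp add: shifted_term_def x_def algebra_simps)
  have "norm (complex_of_nat n powr (-s)) \<le> real n powr (- \<sigma>)"
    using norm_of_real_powr[of "real n" "-s"] n s by (simp add: powr_mono)
  then have "norm (shifted_term a b s n - shifted_term a 0 s n)
      \<le> (3 * real n) * real n powr (- \<sigma>) * (3 * R * (1 / real n))"
    unfolding diff norm_mult
    using linear_growth_le[OF a, of n] n bound mult_mono[OF s(3) x] R
    by (intro mult_mono) (auto simp: norm_of_nat)
  also have "\<dots> = 9 * R * real n powr (- \<sigma>)" using n by (simp add: field_simps)
  finally show ?thesis .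
qed

lemma holomorphic_on_suminf_dominated:
  fixes f :: "nat \<Rightarrow> complex \<Rightarrow> complex"
  assumes S: "open S" and hol: "\<And>n. f n holomorphic_on S"
    and dom: "\<And>x. x \<in> S \<Longrightarrow> \<exists>d>0. cball x d \<subseteq> S \<and> (\<exists>M. summable M \<and>
                 (\<forall>\<^sub>F n in sequentially. \<forall>y\<in>cball x d. norm (f n y) \<le> M n))"
  shows "(\<lambda>s. \<Sum>n. f n s) holomorphic_on S"
proof (rule holomorphic_uniform_sequence[OF S])
  show "(\<lambda>s. \<Sum>n<N. f n s) holomorphic_on S" for N
    using hol by (intro holomorphic_on_sum) auto
  show "\<exists>d>0. cball x d \<subseteq> S \<and> uniform_limit (cball x d) (\<lambda>N s. \<Sum>n<N. f n s) (\<lambda>s. \<Sum>n. f n s) sequentially"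
    if "x \<in> S" for x
    using dom[OF that] Weierstrass_m_test_ev by blast
qed

lemma shift_correction_analytic:
  assumes a: "linear_growth a" and b: "\<bar>b\<bar> \<le> 1" and n0: "n0 \<ge> 2"
  shows "shift_correction a n0 b analytic_on {s. 1 < Re s}"
proof -
  define f where "f n s = (if n0 \<le> n then shifted_term a b s n - shifted_term a 0 s n else 0)" for n s
  have "(\<lambda>s. \<Sum>n. f n s) holomorphic_on {s. 1 < Re s}"
  proof (rule holomorphic_on_suminf_dominated[OF open_halfspace_Re_gt])
    show "f n holomorphic_on {s. 1 < Re s}" for n
      unfolding f_def shifted_term_def by (cases "n0 \<le> n") (auto intro!: holomorphic_intros)
    fix x :: complex assume "x \<in> {s. 1 < Re s}"
    define d where "d = (Re x - 1) / 2"
    define \<sigma> where "\<sigma> = Re x - d"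
    define R where "R = norm x + d"
    have d: "d > 0" and \<sigma>: "\<sigma> > 1" using \<open>x \<in> _\<close> by (auto simp: d_def \<sigma>_def field_simps)
    have near: "\<sigma> \<le> Re y \<and> norm y \<le> R" if "y \<in> cball x d" for y
      using that abs_Re_le_cmod[of "y - x"] norm_triangle_ineq[of x "y - x"]
      by (auto simp: \<sigma>_def R_def dist_norm norm_minus_commute abs_le_iff)
    have "cball x d \<subseteq> {s. 1 < Re s}" using near \<sigma> by force
    moreover have "summable (\<lambda>n::nat. 9 * R * real n powr (- \<sigma>))"
      using \<sigma> by (intro summable_mult) (simp add: summable_real_powr_iff)
    moreover have "\<forall>\<^sub>F n in sequentially. \<forall>y\<in>cball x d. norm (f n y) \<le> 9 * R * real n powr (- \<sigma>)"
    proof -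
      obtain N :: nat where N: "max 2 (4 * R) \<le> real N" using real_arch_simple by blast
      have "norm (f n y) \<le> 9 * R * real n powr (- \<sigma>)" if "n \<ge> N" "y \<in> cball x d" for n y
      proof -
        have "real n \<ge> max 2 (4 * R)" using N that(1) by (meson of_nat_le_iff order.trans)
        moreover have "R \<ge> 0" using d by (simp add: R_def)
        ultimately show ?thesis
          using norm_shifted_term_diff_le[OF a b, of n R \<sigma> y] near[OF that(2)] \<sigma>
          by (auto simp: f_def)
      qed
      then show ?thesis by (auto intro: eventually_sequentiallyI[of N])
    qed
    ultimately show "\<exists>d>0. cball x d \<subseteq> {s. 1 < Re s} \<and> (\<exists>M. summable M \<and>
        (\<forall>\<^sub>F n in sequentially. \<forall>y\<in>cball x d. norm (f n y) \<le> M n))"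
      using d by blast
  qed
  then show ?thesis
    by (simp add: analytic_on_open open_halfspace_Re_gt shift_correction_def[abs_def] f_def)
qed

section \<open>Splitting the series by parity\<close>

lemma has_sum_atLeast_shift_Suc:
  fixes f :: "nat \<Rightarrow> 'a::topological_ab_group_add"
  assumes "(f has_sum S) {n0..}"
  shows "((\<lambda>m. f (Suc m)) has_sum (S - f n0)) {n0..}"
proof -
  have "(f has_sum (S - f n0)) ({n0..} - {n0})"
    using assms by (rule has_sum_Diff) (auto intro: has_sum_finiteI)
  moreover have "{n0..} - {n0} = Suc ` {n0..}"
  proof (intro equalityI subsetI)
    fix k assume "k \<in> {n0..} - {n0}"
    then show "k \<in> Suc ` {n0..}" by (intro image_eqI[of _ _ "k - 1"]) auto
  qed auto
  ultimately show ?thesis by (simp add: has_sum_reindex o_def)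
qed

lemma has_sum_atLeast_shift_pred:
  fixes f :: "nat \<Rightarrow> 'a::topological_comm_monoid_add"
  assumes "(f has_sum S) {n0..}" "n0 \<ge> 1"
  shows "((\<lambda>m. f (m - 1)) has_sum (f (n0 - 1) + S)) {n0..}"
proof -
  have "(f has_sum (f (n0 - 1) + S)) (insert (n0 - 1) {n0..})"
    using assms by (intro has_sum_insert) auto
  moreover have "insert (n0 - 1) {n0..} = (\<lambda>m. m - 1) ` {n0..}"
    using assms(2) by (auto simp: image_iff intro!: bexI[of _ "Suc _"])
  moreover have "inj_on (\<lambda>m. m - 1) {n0..}"
    using assms(2) by (auto simp: inj_on_def)
  ultimately show ?thesis by (simp add: has_sum_reindex o_def)
qed

lemma has_sum_atLeast_parity_split:
  fixes f :: "nat \<Rightarrow> 'a::topological_comm_monoid_add"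
  assumes "((\<lambda>m. f (2*m)) has_sum A) {n0..}" "((\<lambda>m. f (2*m+1)) has_sum B) {n0..}"
  shows "(f has_sum (sum f {n0..<2*n0} + A + B)) {n0..}"
proof -
  define Evens where "Evens = (\<lambda>m. 2*m) ` {n0..}"
  define Odds where "Odds = (\<lambda>m. 2*m+1) ` {n0..}"
  have "(f has_sum A) Evens" "(f has_sum B) Odds"
    using assms by (simp_all add: Evens_def Odds_def has_sum_reindex inj_on_def o_def)
  moreover have "Evens \<inter> Odds = {}"
    unfolding Evens_def Odds_def by auto presburger
  ultimately have "(f has_sum (A + B)) (Evens \<union> Odds)"
    by (rule has_sum_Un_disjoint)
  moreover have "{n0..<2*n0} \<inter> (Evens \<union> Odds) = {}"
    by (auto simp: Evens_def Odds_def)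
  ultimately have "(f has_sum (sum f {n0..<2*n0} + (A + B))) ({n0..<2*n0} \<union> (Evens \<union> Odds))"
    by (intro has_sum_Un_disjoint[OF has_sum_finiteI[OF _ refl]]) auto
  moreover have "{n0..<2*n0} \<union> (Evens \<union> Odds) = {n0..}"
  proof (intro equalityI subsetI)
    fix n assume "n \<in> {n0..}"
    then show "n \<in> {n0..<2*n0} \<union> (Evens \<union> Odds)"
      by (cases "even n") (auto simp: Evens_def Odds_def image_iff elim!: evenE oddE)
  qed (auto simp: Evens_def Odds_def)
  ultimately show ?thesis by (simp add: add.assoc)
qed

lemma of_real_double_powr:
  assumes "t = 2 * u" "u \<ge> 0"
  shows "complex_of_real t powr s = 2 powr s * complex_of_real u powr s"
  using assms powr_times_real[of 2 "of_real u" s] by simp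

lemma shifted_term_doubling:
  fixes s :: complex
  shows "shifted_term xr 0 s (2*m) = 2 powr (-s) * (shifted_term xr 0 s m + shifted_term zr 0 s m)"
    and "shifted_term xr 0 s (2*m+1) = 2 powr (-s) * shifted_term yr (-1/2) s (Suc m)"
    and "m \<ge> 1 \<Longrightarrow>
      shifted_term yr 0 s (2*m) = 2 powr (-s) * (shifted_term zr 0 s m + shifted_term xr 1 s (m-1))"
    and "shifted_term yr 0 s (2*m+1)
      = 2 powr (-s) * (shifted_term zr (1/2) s m + shifted_term xr (-1/2) s (Suc m))"
    and "shifted_term zr 0 s (2*m) = 2 powr (-s) * (2 * shifted_term xr 0 s m)"
    and "shifted_term zr 0 s (2*m+1) = 2 powr (-s) * (2 * shifted_term yr (-1/2) s (Suc m))"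
proof -
  let ?c = "(2::complex) powr (-s)"
  have even: "complex_of_real (real (2*m) + 0) powr (-s) = ?c * complex_of_real (real m + 0) powr (-s)"
    and odd: "complex_of_real (real (2*m+1) + 0) powr (-s)
      = ?c * complex_of_real (real (Suc m) + -1/2) powr (-s)"
    and odd': "complex_of_real (real (2*m+1) + 0) powr (-s) = ?c * complex_of_real (real m + 1/2) powr (-s)"
    by (rule of_real_double_powr; simp)+
  then show "shifted_term xr 0 s (2*m) = ?c * (shifted_term xr 0 s m + shifted_term zr 0 s m)"
    and "shifted_term xr 0 s (2*m+1) = ?c * shifted_term yr (-1/2) s (Suc m)"
    and "shifted_term yr 0 s (2*m+1) = ?c * (shifted_term zr (1/2) s m + shifted_term xr (-1/2) s (Suc m))"
    and "shifted_term zr 0 s (2*m) = ?c * (2 * shifted_term xr 0 s m)"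
    and "shifted_term zr 0 s (2*m+1) = ?c * (2 * shifted_term yr (-1/2) s (Suc m))"
    by (simp only: shifted_term_def xr_double xr_double_Suc yr_double_Suc zr_double zr_double_Suc
        even odd odd', simp add: algebra_simps)+
  assume m: "m \<ge> 1"
  then have "complex_of_real (real (2*m) + 0) powr (-s) = ?c * complex_of_real (real (m-1) + 1) powr (-s)"
    by (intro of_real_double_powr) (auto simp: of_nat_diff)
  moreover have "real (m-1) + 1 = real m + 0" using m by (simp add: of_nat_diff)
  ultimately show "shifted_term yr 0 s (2*m) = ?c * (shifted_term zr 0 s m + shifted_term xr 1 s (m-1))"
    using m by (simp only: shifted_term_def yr_double) (simp add: algebra_simps)
qed

text \<open>The terms with \<open>n \<ge> 2 n0\<close> are split by parity and rewritten with the doubling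
  recurrences; only \<open>n0 \<le> n < 2 n0\<close> survives as a finite sum.\<close>

lemma shifted_dser_functional_equations:
  assumes n0: "n0 \<ge> 2" and s: "2 < Re s"
  defines "H a b \<equiv> shifted_dser a n0 b s" and "t a b \<equiv> shifted_term a b s"
  shows "H xr 0 = sum (t xr 0) {n0..<2*n0} + 2 powr (-s) * (H xr 0 + H zr 0)
            + 2 powr (-s) * (H yr (-1/2) - t yr (-1/2) n0)"
    and "H yr 0 = sum (t yr 0) {n0..<2*n0} + 2 powr (-s) * (H zr 0 + (t xr 1 (n0-1) + H xr 1))
            + 2 powr (-s) * (H zr (1/2) + (H xr (-1/2) - t xr (-1/2) n0))"
    and "H zr 0 = sum (t zr 0) {n0..<2*n0} + 2 powr (-s) * (2 * H xr 0)
            + 2 powr (-s) * (2 * (H yr (-1/2) - t yr (-1/2) n0))"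
proof -
  have H: "(t a b has_sum H a b) {n0..}" if "linear_growth a" "\<bar>b\<bar> \<le> 1" for a b
    unfolding H_def t_def using has_sum_shifted_dser[OF that n0 s] .
  have Hx: "(t xr b has_sum H xr b) {n0..}" and Hy: "(t yr b has_sum H yr b) {n0..}"
    and Hz: "(t zr b has_sum H zr b) {n0..}" if "b \<in> {0, 1, -1/2, 1/2}" for b
    using H linear_growth_rhombus that by auto
  let ?c = "(2::complex) powr (-s)"
  note doubling = shifted_term_doubling[where s = s, folded t_def]
  have "((\<lambda>m. t xr 0 (2*m)) has_sum ?c * (H xr 0 + H zr 0)) {n0..}"
    unfolding doubling(1) by (intro has_sum_cmult_right has_sum_add Hx Hz) simp_all
  moreover have "((\<lambda>m. t xr 0 (2*m+1)) has_sum ?c * (H yr (-1/2) - t yr (-1/2) n0)) {n0..}"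
    unfolding doubling(2) by (intro has_sum_cmult_right has_sum_atLeast_shift_Suc Hy) simp
  ultimately show "H xr 0 = sum (t xr 0) {n0..<2*n0} + ?c * (H xr 0 + H zr 0)
      + ?c * (H yr (-1/2) - t yr (-1/2) n0)"
    by (intro has_sum_unique[OF Hx[of 0]] has_sum_atLeast_parity_split) auto
  have "((\<lambda>m. t xr 1 (m - 1)) has_sum t xr 1 (n0 - 1) + H xr 1) {n0..}"
    using n0 by (intro has_sum_atLeast_shift_pred Hx) auto
  then have "((\<lambda>m. t yr 0 (2*m)) has_sum ?c * (H zr 0 + (t xr 1 (n0-1) + H xr 1))) {n0..}"
    using n0 by (subst has_sum_cong[OF doubling(3)]) (auto intro!: has_sum_cmult_right has_sum_add Hz)
  moreover have "((\<lambda>m. t yr 0 (2*m+1)) has_sum ?c * (H zr (1/2) + (H xr (-1/2) - t xr (-1/2) n0))) {n0..}"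
    unfolding doubling(4) by (intro has_sum_cmult_right has_sum_add has_sum_atLeast_shift_Suc Hx Hz) simp_all
  ultimately show "H yr 0 = sum (t yr 0) {n0..<2*n0} + ?c * (H zr 0 + (t xr 1 (n0-1) + H xr 1))
      + ?c * (H zr (1/2) + (H xr (-1/2) - t xr (-1/2) n0))"
    by (intro has_sum_unique[OF Hy[of 0]] has_sum_atLeast_parity_split) auto
  have "((\<lambda>m. t zr 0 (2*m)) has_sum ?c * (2 * H xr 0)) {n0..}"
    unfolding doubling(5) by (intro has_sum_cmult_right Hx) simp
  moreover have "((\<lambda>m. t zr 0 (2*m+1)) has_sum ?c * (2 * (H yr (-1/2) - t yr (-1/2) n0))) {n0..}"
    unfolding doubling(6) by (intro has_sum_cmult_right has_sum_atLeast_shift_Suc Hy) simp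
  ultimately show "H zr 0 = sum (t zr 0) {n0..<2*n0} + ?c * (2 * H xr 0)
      + ?c * (2 * (H yr (-1/2) - t yr (-1/2) n0))"
    by (intro has_sum_unique[OF Hz[of 0]] has_sum_atLeast_parity_split) auto
qed

section \<open>The determinant and its zeros\<close>

lemma kappa_bounds: "1 < kappa" "kappa < 2"
proof -
  have "4 < sqrt (17::real)" "sqrt (17::real) < 5"
    by (auto simp: real_less_rsqrt real_less_lsqrt)
  then have "2 powr 2 < 3 + sqrt 17" "3 + sqrt 17 < 2 powr 3" by simp_all
  then have "2 < log 2 (3 + sqrt 17)" "log 2 (3 + sqrt 17) < 3"
    by (simp_all add: less_log_iff log_less_iff add_pos_nonneg)
  then show "1 < kappa" "kappa < 2" by (simp_all add: kappa_def)
qed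

lemma Re_pole_set: "z \<in> pole_set \<Longrightarrow> Re z = kappa"
  by (auto simp: pole_set_def)

text \<open>\<open>\<kappa> = -log\<^sub>2 u\<^sub>0\<close> for the root \<open>u\<^sub>0 = (\<surd>17 - 3)/4\<close> of \<open>1 - 3u - 2u\<^sup>2\<close>.\<close>

lemma two_powr_eq_root_imp_pole:
  assumes "(2::complex) powr (-s) = of_real ((sqrt 17 - 3) / 4)"
  shows "s \<in> pole_set"
proof -
  define u0 :: real where "u0 = (sqrt 17 - 3) / 4"
  have pos: "3 + sqrt 17 > (0::real)" by (simp add: add_pos_nonneg)
  moreover have "sqrt 17 * sqrt 17 = (17::real)" by simp
  ultimately have "u0 = 2 / (3 + sqrt 17)"
    by (simp add: u0_def field_simps)
  then have "ln u0 = ln 2 - ln (3 + sqrt 17)"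
    using pos by (simp add: ln_div)
  then have kappa: "kappa = - ln u0 / ln 2"
    by (simp add: kappa_def log_def diff_divide_distrib)
  have "3 < sqrt (17::real)" by (simp add: real_less_rsqrt)
  then have "u0 > 0" by (simp add: u0_def)
  moreover have "(2::complex) powr (-s) = of_real u0" using assms by (simp add: u0_def)
  ultimately have "exp (- s * Ln 2) = exp (complex_of_real (ln u0))"
    by (simp add: powr_def exp_of_real[symmetric] flip: Ln_of_real)
  then obtain n :: int where n: "- s * Ln 2 = complex_of_real (ln u0) + 2 * of_real pi * of_int n * \<i>"
    by (auto simp: exp_eq)
  have L: "Ln (2::complex) = of_real (ln 2)" by (simp flip: Ln_of_real)
  have "s * of_real (ln 2) = - of_real (ln u0) - 2 * of_real pi * of_int n * \<i>"
    using arg_cong[OF n, of uminus] unfolding L by (simp add: algebra_simps)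
  then have "s = of_real (- ln u0 / ln 2) + 2 * pi * \<i> * of_int (-n) / of_real (ln 2)"
    by (simp add: field_simps)
  then show ?thesis unfolding pole_set_def kappa by blast
qed

text \<open>The determinant of the matrix \<open>C\<close> as a polynomial in \<open>u = 2\<^bsup>-s\<^esup>\<close>.\<close>

definition rhombus_det :: "complex \<Rightarrow> complex" where
  "rhombus_det u = (1 + 2*u) * (1 - 3*u - 2*u^2)"

lemma norm_two_powr_minus_less:
  assumes "1 < Re s" shows "norm ((2::complex) powr (-s)) < 1/2"
proof -
  have "norm ((2::complex) powr (-s)) = 2 powr (- Re s)"
    by (subst norm_powr_real_powr) auto
  also have "\<dots> < 2 powr (-1)"
    using assms by (intro powr_less_mono) auto
  finally show ?thesis by (simp add: powr_minus)
qed

lemma linear_factor_nonzero: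
  fixes u :: complex
  assumes "norm u < 1/2" "\<bar>c\<bar> \<le> 2"
  shows "1 + of_real c * u \<noteq> 0"
proof
  assume "1 + of_real c * u = 0"
  then have "1 = norm (of_real c * u)" by (metis add_eq_0_iff norm_minus_cancel norm_one)
  also have "\<dots> \<le> 2 * norm u" using assms(2) by (simp add: norm_mult mult_right_mono)
  also have "\<dots> < 1" using assms(1) by simp
  finally show False by simp
qed

lemma rhombus_det_root:
  assumes u: "norm u < 1/2" and det: "rhombus_det u = 0"
  shows "1 - 3*u - 2*u^2 = 0" and "u = of_real ((sqrt 17 - 3) / 4)"
proof -
  define u1 :: real where "u1 = (-3 - sqrt 17) / 4"
  have "1 + 2*u \<noteq> 0" using linear_factor_nonzero[OF u, of 2] by simp
  then show q: "1 - 3*u - 2*u^2 = 0" using det by (simp add: rhombus_det_def)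
  have u1: "u \<noteq> of_real u1"
  proof -
    have "4 < sqrt (17::real)" by (simp add: real_less_rsqrt)
    then have "norm (complex_of_real u1) > 1/2" by (simp only: norm_of_real) (simp add: u1_def)
    with u show ?thesis by auto
  qed
  have "complex_of_real (sqrt 17) * complex_of_real (sqrt 17) = 17"
    by (metis of_real_mult of_real_numeral real_sqrt_mult_self abs_numeral)
  then have "1 - 3*u - 2*u^2 = -2 * ((u - of_real ((sqrt 17 - 3) / 4)) * (u - of_real u1))"
    by (simp add: u1_def algebra_simps power2_eq_square) (simp add: field_simps)
  with q have "(u - of_real ((sqrt 17 - 3) / 4)) * (u - of_real u1) = 0"
    by (metis mult_eq_0_iff neg_equal_0_iff_equal zero_neq_numeral)
  with u1 show "u = of_real ((sqrt 17 - 3) / 4)" by (metis mult_eq_0_iff right_minus_eq)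
qed

lemma rhombus_det_zero_imp_pole:
  assumes s: "1 < Re s" and det: "rhombus_det (2 powr (-s)) = 0"
  shows "s \<in> pole_set" and "deriv (\<lambda>s. rhombus_det (2 powr (-s))) s \<noteq> 0"
proof -
  define u where "u = (2::complex) powr (-s)"
  have u: "norm u < 1/2" using norm_two_powr_minus_less[OF s] by (simp add: u_def)
  note root = rhombus_det_root[OF u det[folded u_def]]
  show "s \<in> pole_set" using root(2) unfolding u_def by (rule two_powr_eq_root_imp_pole)
  have dexp: "((\<lambda>s. 2 powr (-s)) has_field_derivative (- Ln 2 * u)) (at s)"
  proof -
    have "(\<lambda>s. (2::complex) powr (-s)) = (\<lambda>s. exp (- s * Ln 2))"
      by (auto simp: powr_def)
    then show ?thesis by (auto simp: u_def powr_def intro!: derivative_eq_intros)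
  qed
  have dpoly: "(rhombus_det has_field_derivative (2 * (1 - 3*u - 2*u^2) + (1 + 2*u) * (-3 - 4*u))) (at u)"
    unfolding rhombus_det_def
    by (auto intro!: derivative_eq_intros simp: algebra_simps power2_eq_square)
  have "((\<lambda>s. rhombus_det (2 powr (-s))) has_field_derivative
      (2 * (1 - 3*u - 2*u^2) + (1 + 2*u) * (-3 - 4*u)) * (- Ln 2 * u)) (at s)"
    using DERIV_chain2[OF dpoly[unfolded u_def] dexp[unfolded u_def]] unfolding u_def .
  then have "deriv (\<lambda>s. rhombus_det (2 powr (-s))) s = (1 + 2*u) * (-3 - 4*u) * (- Ln 2 * u)"
    using root(1) by (simp add: DERIV_imp_deriv)
  moreover have "1 + 2*u \<noteq> 0" using linear_factor_nonzero[OF u, of 2] by simp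
  moreover have "-3 - 4*u \<noteq> 0"
  proof -
    have "1 + of_real (4/3) * u \<noteq> 0" by (rule linear_factor_nonzero[OF u]) simp
    moreover have "-3 - 4*u = -3 * (1 + of_real (4/3) * u)" by simp
    ultimately show ?thesis by (metis mult_eq_0_iff neg_equal_0_iff_equal zero_neq_numeral)
  qed
  moreover have "Ln (2::complex) \<noteq> 0" by (simp flip: Ln_of_real)
  moreover have "u \<noteq> 0" by (simp add: u_def)
  ultimately show "deriv (\<lambda>s. rhombus_det (2 powr (-s))) s \<noteq> 0" by simp
qed

section \<open>Meromorphic continuation\<close>

lemma good_continuation_divide:
  assumes N: "N analytic_on {s. 1 < Re s}" and d: "d analytic_on {s. 1 < Re s}"
    and zeros: "\<And>s. 1 < Re s \<Longrightarrow> d s = 0 \<Longrightarrow> s \<in> pole_set \<and> deriv d s \<noteq> 0"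
    and agree: "\<And>s. 2 < Re s \<Longrightarrow> N s / d s = D s"
  shows "good_continuation D (\<lambda>s. N s / d s)"
  unfolding good_continuation_def
proof (intro conjI allI impI ballI)
  show "(\<lambda>s. N s / d s) meromorphic_on {s. 1 < Re s}"
    by (intro meromorphic_on_divide analytic_on_imp_meromorphic_on N d)
  show "N s / d s = D s" if "2 < Re s" for s using agree that by blast
  have pointwise: "N analytic_on {z}" "d analytic_on {z}" if "1 < Re z" for z
    using that analytic_on_subset[OF N] analytic_on_subset[OF d] by auto
  fix s assume s: "1 < Re s \<and> s \<notin> pole_set"
  then show "(\<lambda>s. N s / d s) analytic_on {s}"
    using zeros pointwise by (intro analytic_on_divide) auto
next
  fix z assume z: "z \<in> pole_set" and pole: "is_pole (\<lambda>s. N s / d s) z"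
  have "1 < Re z" using Re_pole_set[OF z] kappa_bounds by simp
  then have Nz: "N analytic_on {z}" and dz: "d analytic_on {z}"
    using analytic_on_subset[OF N] analytic_on_subset[OF d] by auto
  have "d z = 0"
  proof (rule ccontr)
    assume "d z \<noteq> 0"
    then have "(\<lambda>s. N s / d s) analytic_on {z}" using Nz dz by (intro analytic_on_divide) auto
    then show False using pole analytic_at_imp_no_pole by blast
  qed
  then have "zorder d z = 1"
    using zeros[OF \<open>1 < Re z\<close>] by (intro zorder_zero_eqI'[OF dz]) auto
  have nonzero: "\<forall>\<^sub>F w in at z. N w / d w \<noteq> 0" using non_zero_neighbour_pole[OF pole] .
  have fN: "\<exists>\<^sub>F w in at z. N w \<noteq> 0" and fd: "\<exists>\<^sub>F w in at z. d w \<noteq> 0"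
    using eventually_frequently[OF _ eventually_mono[OF nonzero]] by force+
  have "(\<lambda>s. N s / d s) meromorphic_on {z}"
    using Nz dz by (intro meromorphic_on_divide analytic_on_imp_meromorphic_on)
  then have "zorder (\<lambda>s. N s / d s) z < 0"
    using pole by (intro isolated_pole_imp_neg_zorder) (simp_all add: meromorphic_at_iff)
  moreover have "zorder (\<lambda>s. N s / d s) z = zorder N z - zorder d z"
    using Nz dz fN fd by (intro zorder_divide analytic_on_imp_meromorphic_on)
  moreover have "zorder N z \<ge> 0" by (rule zorder_ge_0[OF Nz fN])
  ultimately show "zorder (\<lambda>s. N s / d s) z = -1" using \<open>zorder d z = 1\<close> by linarith
qed

text \<open>Cramer's rule for the matrix \<open>C\<close>: each unknown is a cofactor combination of
  \<open>J, K, L\<close> divided by \<open>rhombus_det (2\<^bsup>-s\<^esup>)\<close>.\<close>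

lemma good_continuations_of_linear_system:
  fixes X Y Z J K L :: "complex \<Rightarrow> complex"
  assumes J: "J analytic_on {s. 1 < Re s}" and K: "K analytic_on {s. 1 < Re s}"
    and L: "L analytic_on {s. 1 < Re s}"
    and sys: "\<And>s. 2 < Re s \<Longrightarrow>
        X s - 2 powr (-s) * X s - 2 powr (-s) * Y s - 2 powr (-s) * Z s = J s
      \<and> Y s - 2 powr (1-s) * X s - 2 powr (1-s) * Z s = K s
      \<and> Z s - 2 powr (1-s) * X s - 2 powr (1-s) * Y s = L s"
  shows "(\<exists>F. good_continuation X F) \<and> (\<exists>G. good_continuation Y G) \<and> (\<exists>H. good_continuation Z H)"
proof -
  define u :: "complex \<Rightarrow> complex" where "u s = 2 powr (-s)" for s
  define d where "d s = rhombus_det (u s)" for s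
  have u: "u analytic_on {s. 1 < Re s}"
    unfolding u_def by (intro analytic_intros) auto
  have d: "d analytic_on {s. 1 < Re s}"
    unfolding d_def rhombus_det_def using u by (intro analytic_intros)
  have zeros: "s \<in> pole_set \<and> deriv d s \<noteq> 0" if "1 < Re s" "d s = 0" for s
    using rhombus_det_zero_imp_pole that unfolding d_def[abs_def] u_def by blast
  have cont: "good_continuation D (\<lambda>s. N s / d s)"
    if N: "N analytic_on {s. 1 < Re s}" and DN: "\<And>s. 2 < Re s \<Longrightarrow> D s * d s = N s" for D N
  proof (rule good_continuation_divide[OF N d zeros])
    fix s :: complex assume s: "2 < Re s"
    have "d s \<noteq> 0"
      using zeros[of s] s Re_pole_set kappa_bounds by fastforce
    then show "N s / d s = D s" using DN[OF s] by (simp add: field_simps)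
  qed
  have two_powr: "2 powr (1 - s) = 2 * u s" for s
    using powr_add[of "2::complex" 1 "-s"] by (simp add: u_def)
  have cramer: "X s * d s = (1 - 4 * u s ^ 2) * J s + (u s + 2 * u s ^ 2) * (K s + L s)"
    "Y s * d s = (2 * u s + 4 * u s ^ 2) * J s + (1 - u s - 2 * u s ^ 2) * K s + 2 * u s * L s"
    "Z s * d s = (2 * u s + 4 * u s ^ 2) * J s + 2 * u s * K s + (1 - u s - 2 * u s ^ 2) * L s"
    if "2 < Re s" for s
  proof -
    have "J s = X s - u s * X s - u s * Y s - u s * Z s"
      and "K s = Y s - 2 * u s * X s - 2 * u s * Z s"
      and "L s = Z s - 2 * u s * X s - 2 * u s * Y s"
      using sys[OF that] unfolding two_powr u_def by auto
    then show "X s * d s = (1 - 4 * u s ^ 2) * J s + (u s + 2 * u s ^ 2) * (K s + L s)"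
      "Y s * d s = (2 * u s + 4 * u s ^ 2) * J s + (1 - u s - 2 * u s ^ 2) * K s + 2 * u s * L s"
      "Z s * d s = (2 * u s + 4 * u s ^ 2) * J s + 2 * u s * K s + (1 - u s - 2 * u s ^ 2) * L s"
      unfolding d_def rhombus_det_def by algebra+
  qed
  have "good_continuation X (\<lambda>s. ((1 - 4 * u s ^ 2) * J s + (u s + 2 * u s ^ 2) * (K s + L s)) / d s)"
    and "good_continuation Y (\<lambda>s. ((2 * u s + 4 * u s ^ 2) * J s + (1 - u s - 2 * u s ^ 2) * K s
      + 2 * u s * L s) / d s)"
    and "good_continuation Z (\<lambda>s. ((2 * u s + 4 * u s ^ 2) * J s + 2 * u s * K s
      + (1 - u s - 2 * u s ^ 2) * L s) / d s)"
    by (rule cont, intro analytic_intros J K L u, erule cramer)+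
  then show ?thesis by blast
qed

lemma div_nat_powr_eq_shifted_term:
  assumes "real k = 2 * (real n + b)" "real n + b \<ge> 0"
  shows "of_nat (a n) / of_nat k powr s = 2 powr (-s) * shifted_term a b s n"
proof -
  have "of_nat (a n) / of_nat k powr s = of_nat (a n) * complex_of_real (real k) powr (-s)"
    by (simp add: powr_minus divide_inverse)
  also have "\<dots> = 2 powr (-s) * shifted_term a b s n"
    using of_real_double_powr[OF assms, of "-s"] by (simp add: shifted_term_def)
  finally show ?thesis .
qed

lemma rhombus_dser_equations:
  assumes n0: "n0 \<ge> 2" and s: "2 < Re s"
  defines "X \<equiv> dser xr n0" and "Y \<equiv> dser yr n0" and "Z \<equiv> dser zr n0"
  shows "X s - 2 powr (-s) * X s - 2 powr (-s) * Y s - 2 powr (-s) * Z s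
           = 2 powr (-s) * Sig s (-1/2) Y - of_nat (yr n0) / of_nat (2*n0 - 1) powr s
             + (\<Sum>n\<in>{n0..<2*n0}. of_nat (xr n) / of_nat n powr s)"
    and "Y s - 2 powr (1-s) * X s - 2 powr (1-s) * Z s
           = 2 powr (-s) * Sig s 1 X + 2 powr (-s) * Sig s (-1/2) X + 2 powr (-s) * Sig s (1/2) Z
             + of_nat (xr (n0 - 1)) / of_nat (2*n0) powr s - of_nat (xr n0) / of_nat (2*n0 - 1) powr s
             + (\<Sum>n\<in>{n0..<2*n0}. of_nat (yr n) / of_nat n powr s)"
    and "Z s - 2 powr (1-s) * X s - 2 powr (1-s) * Y s
           = 2 powr (1-s) * Sig s (-1/2) Y - 2 * of_nat (yr n0) / of_nat (2*n0 - 1) powr s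
             + (\<Sum>n\<in>{n0..<2*n0}. of_nat (zr n) / of_nat n powr s)"
proof -
  note growth = linear_growth_rhombus
  have dser: "dser a n0 s = shifted_dser a n0 0 s" if "linear_growth a" for a
    using dser_eq_shifted_dser[OF that n0 s] .
  have Sig: "Sig s (of_real b) (dser a n0) = shifted_dser a n0 b s - shifted_dser a n0 0 s"
    if "linear_growth a" "\<bar>b\<bar> \<le> 1" for a b
    using Sig_dser_eq[OF that n0 s] .
  have Sig_half: "Sig s (-1/2) (dser a n0) = shifted_dser a n0 (-1/2) s - shifted_dser a n0 0 s"
    and Sig_half': "Sig s (1/2) (dser a n0) = shifted_dser a n0 (1/2) s - shifted_dser a n0 0 s"
    and Sig_one: "Sig s 1 (dser a n0) = shifted_dser a n0 1 s - shifted_dser a n0 0 s"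
    if "linear_growth a" for a
    using Sig[OF that, of "-1/2"] Sig[OF that, of "1/2"] Sig[OF that, of 1] by simp_all
  have boundary: "of_nat (a n0) / of_nat (2*n0 - 1) powr s = 2 powr (-s) * shifted_term a (-1/2) s n0"
    "of_nat (a (n0 - 1)) / of_nat (2*n0) powr s = 2 powr (-s) * shifted_term a 1 s (n0 - 1)" for a
    using n0 by (intro div_nat_powr_eq_shifted_term; simp add: of_nat_diff)+
  have initial: "(\<Sum>n\<in>{n0..<2*n0}. of_nat (a n) / of_nat n powr s) = sum (shifted_term a 0 s) {n0..<2*n0}"
    for a using n0 by (intro sum.cong) (auto simp: shifted_term_0)
  have two_powr: "(2::complex) powr (1 - s) = 2 * 2 powr (-s)"
    using powr_add[of "2::complex" 1 "-s"] by simp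
  note E = shifted_dser_functional_equations[OF n0 s]
  show "X s - 2 powr (-s) * X s - 2 powr (-s) * Y s - 2 powr (-s) * Z s
           = 2 powr (-s) * Sig s (-1/2) Y - of_nat (yr n0) / of_nat (2*n0 - 1) powr s
             + (\<Sum>n\<in>{n0..<2*n0}. of_nat (xr n) / of_nat n powr s)"
    unfolding X_def Y_def Z_def dser[OF growth(1)] dser[OF growth(2)] dser[OF growth(3)]
      Sig_half[OF growth(2)] boundary initial
    using E(1) by algebra
  show "Y s - 2 powr (1-s) * X s - 2 powr (1-s) * Z s
           = 2 powr (-s) * Sig s 1 X + 2 powr (-s) * Sig s (-1/2) X + 2 powr (-s) * Sig s (1/2) Z
             + of_nat (xr (n0 - 1)) / of_nat (2*n0) powr s - of_nat (xr n0) / of_nat (2*n0 - 1) powr s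
             + (\<Sum>n\<in>{n0..<2*n0}. of_nat (yr n) / of_nat n powr s)"
    unfolding X_def Y_def Z_def Sig_one[OF growth(1)] Sig_half[OF growth(1)] Sig_half'[OF growth(3)]
      dser[OF growth(1)] dser[OF growth(2)] dser[OF growth(3)] boundary initial two_powr
    using E(2) by algebra
  show "Z s - 2 powr (1-s) * X s - 2 powr (1-s) * Y s
           = 2 powr (1-s) * Sig s (-1/2) Y - 2 * of_nat (yr n0) / of_nat (2*n0 - 1) powr s
             + (\<Sum>n\<in>{n0..<2*n0}. of_nat (zr n) / of_nat n powr s)"
    unfolding X_def Y_def Z_def Sig_half[OF growth(2)] dser[OF growth(1)] dser[OF growth(2)]
      dser[OF growth(3)] times_divide_eq_right[symmetric] boundary initial two_powr
    using E(3) by algebra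
qed

lemma analytic_on_div_nat_powr: "m \<ge> 1 \<Longrightarrow> (\<lambda>s. c / of_nat m powr s) analytic_on A"
  by (intro analytic_intros) auto

lemma rhombus_dser_continuations:
  assumes n0: "n0 \<ge> 2"
  shows "(\<exists>F. good_continuation (dser xr n0) F) \<and> (\<exists>G. good_continuation (dser yr n0) G)
       \<and> (\<exists>H. good_continuation (dser zr n0) H)"
proof (rule good_continuations_of_linear_system)
  note growth = linear_growth_rhombus
  define J where "J s = 2 powr (-s) * shift_correction yr n0 (-1/2) s
    - of_nat (yr n0) / of_nat (2*n0 - 1) powr s + (\<Sum>n\<in>{n0..<2*n0}. of_nat (xr n) / of_nat n powr s)"
    for s :: complex
  define K where "K s = 2 powr (-s) * shift_correction xr n0 1 s + 2 powr (-s) * shift_correction xr n0 (-1/2) s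
    + 2 powr (-s) * shift_correction zr n0 (1/2) s
    + of_nat (xr (n0 - 1)) / of_nat (2*n0) powr s - of_nat (xr n0) / of_nat (2*n0 - 1) powr s
    + (\<Sum>n\<in>{n0..<2*n0}. of_nat (yr n) / of_nat n powr s)" for s :: complex
  define L where "L s = 2 powr (1-s) * shift_correction yr n0 (-1/2) s
    - 2 * of_nat (yr n0) / of_nat (2*n0 - 1) powr s + (\<Sum>n\<in>{n0..<2*n0}. of_nat (zr n) / of_nat n powr s)"
    for s :: complex
  show "J analytic_on {s. 1 < Re s}" "K analytic_on {s. 1 < Re s}" "L analytic_on {s. 1 < Re s}"
    unfolding J_def[abs_def] K_def[abs_def] L_def[abs_def] using n0 growth
    by (intro analytic_intros shift_correction_analytic analytic_on_div_nat_powr; simp)+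
  fix s :: complex assume s: "2 < Re s"
  have "Sig s (of_real b) (dser a n0) = shift_correction a n0 b s"
    if "linear_growth a" "\<bar>b\<bar> \<le> 1" for a b
    using Sig_dser_eq[OF that n0 s] shift_correction_eq[OF that n0 s] by simp
  from this[of _ "-1/2"] this[of _ "1/2"] this[of _ 1]
  have "Sig s (-1/2) (dser a n0) = shift_correction a n0 (-1/2) s"
    "Sig s (1/2) (dser a n0) = shift_correction a n0 (1/2) s"
    "Sig s 1 (dser a n0) = shift_correction a n0 1 s" if "linear_growth a" for a
    using that by simp_all
  with rhombus_dser_equations[OF n0 s] growth
  show "dser xr n0 s - 2 powr (-s) * dser xr n0 s - 2 powr (-s) * dser yr n0 s
      - 2 powr (-s) * dser zr n0 s = J s
    \<and> dser yr n0 s - 2 powr (1-s) * dser xr n0 s - 2 powr (1-s) * dser zr n0 s = K s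
    \<and> dser zr n0 s - 2 powr (1-s) * dser xr n0 s - 2 powr (1-s) * dser yr n0 s = L s"
    unfolding J_def K_def L_def by simp
qed

theorem lemma3p2:
  fixes n0 :: nat
  assumes "n0 \<ge> 2"
  defines "X \<equiv> dser xr n0" and "Y \<equiv> dser yr n0" and "Z \<equiv> dser zr n0"
  shows "(\<forall>s::complex. 2 < Re s \<longrightarrow>
            X s - 2 powr (-s) * X s - 2 powr (-s) * Y s - 2 powr (-s) * Z s
              = 2 powr (-s) * Sig s (-1/2) Y - of_nat (yr n0) / of_nat (2*n0 - 1) powr s
                + (\<Sum>n\<in>{n0..<2*n0}. of_nat (xr n) / of_nat n powr s)
          \<and> Y s - 2 powr (1-s) * X s - 2 powr (1-s) * Z s
              = 2 powr (-s) * Sig s 1 X + 2 powr (-s) * Sig s (-1/2) X + 2 powr (-s) * Sig s (1/2) Z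
                + of_nat (xr (n0 - 1)) / of_nat (2*n0) powr s - of_nat (xr n0) / of_nat (2*n0 - 1) powr s
                + (\<Sum>n\<in>{n0..<2*n0}. of_nat (yr n) / of_nat n powr s)
          \<and> Z s - 2 powr (1-s) * X s - 2 powr (1-s) * Y s
              = 2 powr (1-s) * Sig s (-1/2) Y - 2 * of_nat (yr n0) / of_nat (2*n0 - 1) powr s
                + (\<Sum>n\<in>{n0..<2*n0}. of_nat (zr n) / of_nat n powr s))
       \<and> (\<exists>F. good_continuation X F) \<and> (\<exists>G. good_continuation Y G) \<and> (\<exists>H. good_continuation Z H)"
  using rhombus_dser_equations[OF assms(1)] rhombus_dser_continuations[OF assms(1)]
  unfolding X_def Y_def Z_def by blast

end
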